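(* Let $B \in M_m \otimes M_n$ be symmetric. Then $W^{1+i}_{\max}(B)$ equals the optimal value of the optimization problem \[ \text{maximize } \operatorname{Tr}(BX) \ \text{ subject to } \ \operatorname{Tr}(BX) = \operatorname{Tr}(BX^\Gamma),\ \operatorname{Tr}(X) = 1,\ X \succeq 0, \] over real symmetric matrices $X \in M_m\otimes M_n$, and it also equals the optimal value of \[ \text{minimize } c \ \text{ subject to } \ pB + (1-p)B^\Gamma \preceq cI, \] over $c, p \in \mathbb{R}$.
   Context: $M_n$ denotes real $n\times n$ matrices and $M_m\otimes M_n$ is identified with $M_{mn}$ via the Kronecker product. For $A = \sum_j X_j \otimes Y_j \in M_m\otimes M_n$, the partial transpose is the linear map $A^\Gamma = \sum_j X_j \otimes Y_j^T$. $X\succeq 0$ means $X$ is positive semidefinite, and $S \preceq cI$ means $cI - S$ is positive semidefinite. The numerical range of a complex matrix $A\in M_N(\mathbb{C})$ is $W(A) = \{\mathbf{x}^*A\mathbf{x} : \mathbf{x}\in\mathbb{C}^N, \|\mathbf{x}\|=1\}$. Define $W^{1+i}(B) = \{c\in\mathbb{R} : c(1+i) \in W(B + iB^\Gamma)\}$; this is a nonempty compact interval, and $W^{1+i}_{\max}(B)$ denotes its maximum. *)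

theory Defs
  imports "HOL-Analysis.Analysis"
begin

text \<open>Matrices in M_m (x) M_n = M_{mn} are indexed by pairs (a,b) with a :: 'm, b :: 'n;
  the Kronecker product X (x) Y has entry X a c * Y b d at ((a,b),(c,d)).\<close>

type_synonym ('m,'n) bimat = "real ^ ('m \<times> 'n) ^ ('m \<times> 'n)"

definition kron :: "real^'m^'m \<Rightarrow> real^'n^'n \<Rightarrow> ('m::finite,'n::finite) bimat" where
  "kron X Y = (\<chi> i j. X $ fst i $ fst j * Y $ snd i $ snd j)"

text \<open>Partial transpose: the linear map with (X (x) Y)^Gamma = X (x) Y^T, i.e.
  A^Gamma ((a,b),(c,d)) = A ((a,d),(c,b)).\<close>
definition ptrans :: "('m::finite,'n::finite) bimat \<Rightarrow> ('m,'n) bimat" where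
  "ptrans A = (\<chi> i j. A $ (fst i, snd j) $ (fst j, snd i))"

lemma ptrans_kron: "ptrans (kron X Y) = kron X (transpose Y)"
  by (simp add: ptrans_def kron_def transpose_def vec_eq_iff)

definition symmetric_mat :: "'a^'k^'k \<Rightarrow> bool" where
  "symmetric_mat A \<longleftrightarrow> transpose A = A"

definition psd :: "real^'k^'k \<Rightarrow> bool" where
  "psd A \<longleftrightarrow> symmetric_mat A \<and> (\<forall>x. 0 \<le> x \<bullet> (A *v x))"

definition numerical_range :: "complex^'k^'k \<Rightarrow> complex set" where
  "numerical_range A = {(\<Sum>i\<in>UNIV. \<Sum>j\<in>UNIV. cnj (x $ i) * A $ i $ j * x $ j) | x. norm x = 1}"

definition W1i :: "('m::finite,'n::finite) bimat \<Rightarrow> real set" where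
  "W1i B = {c. complex_of_real c * (1 + \<i>) \<in>
      numerical_range (\<chi> i j. complex_of_real (B $ i $ j) + \<i> * complex_of_real (ptrans B $ i $ j))}"

definition W1i_max :: "('m::finite,'n::finite) bimat \<Rightarrow> real" where
  "W1i_max B = Sup (W1i B)"

end

theory Submission
  imports Defs
begin

text \<open>Put C = B^\<Gamma> and D = B - C, a symmetric matrix with zero diagonal and hence either
  zero or indefinite. The largest eigenvalue of the pencil C + q D = q B + (1 - q) C is a convex
  function of q that (unless D = 0) tends to infinity in both directions, so it attains its
  minimum L at some p.
  Perturbing p to either side produces top eigenvectors u, v of C + p D with
  u^T D u \<ge> 0 \<ge> v^T D v, and a vector x on the segment between them is a top eigenvector
  with x^T B x = x^T C x = L. Now x (as a vector of the numerical range, and as the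
  density matrix x x^T) is feasible with value L for the two maximization problems, while
  (L, p) is feasible with value L for the minimization problem; weak duality, which for the
  semidefinite program rests on Tr(P X) \<ge> 0 for positive semidefinite P and X, closes all
  three gaps.\<close>

section \<open>Quadratic forms\<close>

lemma symmetric_mat_iff: "symmetric_mat M \<longleftrightarrow> (\<forall>i j. M $ i $ j = M $ j $ i)"
  unfolding symmetric_mat_def transpose_def vec_eq_iff by auto

lemma form_eq_sum: "x \<bullet> (M *v y) = (\<Sum>i\<in>UNIV. \<Sum>j\<in>UNIV. x $ i * M $ i $ j * y $ j)"
  by (simp add: inner_vec_def matrix_vector_mult_def sum_distrib_left mult.assoc)

lemma form_axis: "axis i 1 \<bullet> ((M::real^'k^'k) *v axis j 1) = M $ i $ j"
  by (simp add: matrix_vector_mult_basis inner_axis' column_def)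

lemma symmetric_form_commute:
  fixes M :: "real^'k^'k"
  assumes "symmetric_mat M"
  shows "x \<bullet> (M *v y) = y \<bullet> (M *v x)"
  by (metis assms dot_lmul_matrix inner_commute symmetric_mat_def vector_transpose_matrix)

lemma form_scaleR_matrix [simp]: "x \<bullet> ((c *\<^sub>R M) *v y) = c * (x \<bullet> (M *v (y::real^'k)))"
  by (simp flip: scaleR_matrix_vector_assoc)

lemma form_scaleR_vector: "(c *\<^sub>R x) \<bullet> (M *v (c *\<^sub>R x)) = c\<^sup>2 * (x \<bullet> (M *v (x::real^'k)))"
  by (simp add: matrix_vector_mult_scaleR power2_eq_square)

lemma form_pencil: "x \<bullet> ((C + q *\<^sub>R D) *v x) = x \<bullet> (C *v x) + q * (x \<bullet> (D *v (x::real^'k)))"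
  by (simp add: matrix_vector_mult_add_rdistrib inner_add_right)

lemma form_shift: "x \<bullet> ((c *\<^sub>R mat 1 - M) *v x) = c * (x \<bullet> x) - x \<bullet> (M *v (x::real^'k))"
  by (simp add: matrix_vector_mult_diff_rdistrib inner_diff_right)

lemma form_expand:
  fixes M :: "real^'k^'k"
  assumes "symmetric_mat M"
  shows "(a *\<^sub>R x + b *\<^sub>R y) \<bullet> (M *v (a *\<^sub>R x + b *\<^sub>R y))
           = a\<^sup>2 * (x \<bullet> (M *v x)) + 2 * a * b * (x \<bullet> (M *v y)) + b\<^sup>2 * (y \<bullet> (M *v y))"
  using symmetric_form_commute[OF assms, of y x]
  by (simp add: algebra_simps power2_eq_square)

lemma continuous_on_form:
  fixes M :: "real^'k^'k"
  assumes "continuous_on S f"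
  shows "continuous_on S (\<lambda>t. f t \<bullet> (M *v f t))"
  using assms bounded_linear.continuous_on[OF matrix_vector_mul_bounded_linear assms]
  by (rule continuous_on_inner)

lemma tendsto_form:
  fixes M :: "real^'k^'k"
  assumes "(f \<longlongrightarrow> l) F"
  shows "((\<lambda>i. f i \<bullet> (M *v f i)) \<longlongrightarrow> l \<bullet> (M *v l)) F"
  using assms bounded_linear.tendsto[OF matrix_vector_mul_bounded_linear assms]
  by (rule tendsto_inner)

section \<open>Positive semidefinite matrices\<close>

lemma nonneg_quadratic_discrim:
  fixes a b c :: real
  assumes nonneg: "\<And>t. 0 \<le> a + 2 * t * b + t\<^sup>2 * c" and "0 \<le> c"
  shows "b\<^sup>2 \<le> a * c"
proof (cases "c = 0")
  case True
  have "b = 0"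
  proof (rule ccontr)
    assume "b \<noteq> 0"
    have "0 \<le> a + 2 * (- (a + 1) / (2 * b)) * b"
      using nonneg[of "- (a + 1) / (2 * b)"] True by simp
    also have "\<dots> = -1" using \<open>b \<noteq> 0\<close> by (simp add: field_simps)
    finally show False by simp
  qed
  with True show ?thesis by simp
next
  case False
  with \<open>0 \<le> c\<close> have "0 < c" by simp
  have "0 \<le> a + 2 * (- b / c) * b + (- b / c)\<^sup>2 * c" by (rule nonneg)
  also have "\<dots> = (a * c - b\<^sup>2) / c" using \<open>0 < c\<close> by (simp add: field_simps power2_eq_square)
  finally show ?thesis using \<open>0 < c\<close> by (simp add: zero_le_divide_iff)
qed

lemma psd_cauchy_schwarz:
  assumes "psd M"
  shows "(x \<bullet> (M *v y))\<^sup>2 \<le> (x \<bullet> (M *v x)) * (y \<bullet> (M *v y))"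
proof (rule nonneg_quadratic_discrim)
  from assms have sym: "symmetric_mat M" and nonneg: "\<And>z. 0 \<le> z \<bullet> (M *v z)"
    by (auto simp: psd_def)
  show "0 \<le> x \<bullet> (M *v x) + 2 * t * (x \<bullet> (M *v y)) + t\<^sup>2 * (y \<bullet> (M *v y))" for t
    using nonneg[of "x + t *\<^sub>R y"] form_expand[OF sym, of 1 x t y] by simp
  show "0 \<le> y \<bullet> (M *v y)" by (rule nonneg)
qed

lemma psd_diag_nonneg: "psd X \<Longrightarrow> 0 \<le> X $ j $ j"
  by (metis form_axis psd_def)

lemma psd_diag_zero:
  assumes "psd X" "X $ j $ j = 0"
  shows "X $ j $ l = 0"
  using psd_cauchy_schwarz[OF assms(1), of "axis j 1" "axis l 1"] assms(2)
  by (simp add: form_axis)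

lemma psd_zero_diag_eq_0:
  assumes "psd X" "\<And>i. X $ i $ i = 0"
  shows "X = 0"
  using psd_diag_zero[OF assms(1) assms(2)] by (simp add: vec_eq_iff)

lemma psd_shift_imp_form_le: "psd (c *\<^sub>R mat 1 - M) \<Longrightarrow> x \<bullet> (M *v x) \<le> c * (x \<bullet> x)"
  using form_shift[of x c M] unfolding psd_def by (metis diff_ge_0_iff_ge)

lemma zero_diag_form_indefinite:
  fixes D :: "real^'k^'k"
  assumes D: "symmetric_mat D" and diag: "\<And>i. D $ i $ i = 0"
  shows "(\<exists>y. 0 < y \<bullet> (D *v y)) \<longleftrightarrow> (\<exists>y. y \<bullet> (D *v y) < 0)"
proof -
  have "psd D \<Longrightarrow> D = 0" and "psd (- D) \<Longrightarrow> D = 0"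
    using psd_zero_diag_eq_0[of D] psd_zero_diag_eq_0[of "- D"] diag by auto
  moreover have "psd D" if "\<not> (\<exists>y. y \<bullet> (D *v y) < 0)"
    using D that by (simp add: psd_def not_less)
  moreover have "psd (- D)" if "\<not> (\<exists>y. 0 < y \<bullet> (D *v y))"
  proof -
    have "x \<bullet> ((- D) *v x) = - (x \<bullet> (D *v x))" for x
      by (simp add: form_eq_sum sum_negf)
    with D that show ?thesis by (simp add: psd_def symmetric_mat_iff not_less)
  qed
  ultimately show ?thesis by force
qed

section \<open>Traces of products\<close>

definition outer :: "real^'k \<Rightarrow> real^'k^'k" where
  "outer y = (\<chi> i j. y $ i * y $ j)"

lemma outer_mult_vector: "outer y *v z = (y \<bullet> z) *\<^sub>R y"
  by (simp add: vec_eq_iff outer_def matrix_vector_mult_def inner_vec_def sum_distrib_left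
      sum_distrib_right ac_simps)

lemma psd_outer: "psd (outer y)"
proof -
  have "x \<bullet> (outer y *v x) = (x \<bullet> y)\<^sup>2" for x
    by (simp add: outer_mult_vector inner_commute power2_eq_square)
  then show ?thesis
    by (simp add: psd_def symmetric_mat_iff outer_def mult.commute)
qed

lemma trace_mult_eq_sum: "trace (A ** X) = (\<Sum>i\<in>UNIV. \<Sum>j\<in>UNIV. A $ i $ j * X $ j $ i)"
  by (simp add: trace_def matrix_matrix_mult_def)

lemma trace_mult_outer: "trace (P ** outer y) = y \<bullet> (P *v y)"
  unfolding trace_def matrix_matrix_mult_def outer_def form_eq_sum
  by (simp add: sum_distrib_left ac_simps)

lemma trace_mult_shift: "trace ((c *\<^sub>R mat 1 - M) ** X) = c * trace X - trace (M ** (X::real^'k^'k))"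
proof -
  have "(c *\<^sub>R mat 1 - M) $ i $ j * X $ j $ i
        = (if i = j then c * X $ i $ i else 0) - M $ i $ j * X $ j $ i" for i j
    by (simp add: mat_def algebra_simps)
  then show ?thesis
    unfolding trace_mult_eq_sum by (simp add: sum_subtractf trace_def sum_distrib_left)
qed

lemma trace_mult_pencil:
  "trace ((a *\<^sub>R P + b *\<^sub>R Q) ** X) = a * trace (P ** X) + b * trace (Q ** (X::real^'k^'k))"
  by (simp add: trace_mult_eq_sum algebra_simps sum.distrib sum_distrib_left)

text \<open>One step of Cholesky elimination; iterating it decomposes a psd matrix into rank-one psd
  matrices.\<close>

lemma psd_minus_outer_column:
  fixes X :: "real^'k^'k"
  assumes X: "psd X" and pos: "0 < X $ k $ k"
  defines "y \<equiv> (1 / sqrt (X $ k $ k)) *\<^sub>R column k X"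
  shows "psd (X - outer y)"
    and "{j. (X - outer y) $ j $ j \<noteq> 0} \<subset> {j. X $ j $ j \<noteq> 0}"
proof -
  have entry: "(X - outer y) $ i $ j = X $ i $ j - X $ i $ k * X $ j $ k / X $ k $ k" for i j
    using pos by (simp add: y_def outer_def column_def real_sqrt_mult[symmetric])
  have "symmetric_mat (X - outer y)"
    using X unfolding psd_def symmetric_mat_iff entry by (simp add: mult.commute)
  moreover have "0 \<le> z \<bullet> ((X - outer y) *v z)" for z
  proof -
    let ?c = "z \<bullet> (X *v axis k 1)"
    have "z \<bullet> (outer y *v z) = ?c\<^sup>2 / X $ k $ k"
      using pos by (simp add: outer_mult_vector y_def matrix_vector_mult_basis inner_commute
          power2_eq_square)
    moreover have "?c\<^sup>2 \<le> z \<bullet> (X *v z) * X $ k $ k"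
      using psd_cauchy_schwarz[OF X, of z "axis k 1"] by (simp add: form_axis)
    ultimately show ?thesis
      using pos by (simp add: matrix_vector_mult_diff_rdistrib inner_diff_right divide_le_eq)
  qed
  ultimately show "psd (X - outer y)" by (simp add: psd_def)
  have "(X - outer y) $ k $ k = 0" using pos by (simp only: entry) simp
  moreover have "(X - outer y) $ j $ j = 0" if "X $ j $ j = 0" for j
    using that psd_diag_zero[OF X that, of k] by (simp only: entry)
  ultimately show "{j. (X - outer y) $ j $ j \<noteq> 0} \<subset> {j. X $ j $ j \<noteq> 0}"
    using pos by force
qed

lemma trace_mult_psd_nonneg:
  fixes P X :: "real^'k^'k"
  assumes P: "psd P" and X: "psd X"
  shows "0 \<le> trace (P ** X)"
  using X
proof (induction "card {j. X $ j $ j \<noteq> 0}" arbitrary: X rule: less_induct)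
  case less
  show ?case
  proof (cases "\<exists>k. X $ k $ k \<noteq> 0")
    case False
    then have "X = 0" using psd_zero_diag_eq_0[OF less.prems] by blast
    then show ?thesis by (simp add: trace_def)
  next
    case True
    then obtain k where "X $ k $ k \<noteq> 0" by blast
    with psd_diag_nonneg[OF less.prems] have pos: "0 < X $ k $ k"
      by (simp add: order_le_neq_trans)
    define y where "y = (1 / sqrt (X $ k $ k)) *\<^sub>R column k X"
    note peel = psd_minus_outer_column[OF less.prems pos, folded y_def]
    have "0 \<le> trace (P ** (X - outer y))"
      using less.hyps[OF psubset_card_mono[OF _ peel(2)] peel(1)] by simp
    moreover have "0 \<le> trace (P ** outer y)"
      using P by (simp add: trace_mult_outer psd_def)
    ultimately show ?thesis
      by (metis add_nonneg_nonneg diff_add_cancel matrix_add_ldistrib trace_add)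
  qed
qed

section \<open>The top eigenvalue along a pencil\<close>

definition lambda_max :: "real^'k^'k \<Rightarrow> real" where
  "lambda_max M = (SUP x\<in>sphere 0 1. x \<bullet> (M *v x))"

lemma lambda_max_attained: "\<exists>x. norm x = 1 \<and> x \<bullet> (M *v x) = lambda_max M"
  and form_le_lambda_max_unit: "norm y = 1 \<Longrightarrow> y \<bullet> (M *v y) \<le> lambda_max M"
proof -
  have "sphere (0::real^'k) 1 \<noteq> {}" by simp
  moreover have "continuous_on (sphere 0 1) (\<lambda>x. x \<bullet> (M *v x))"
    by (intro continuous_on_form continuous_on_id)
  ultimately obtain x where x: "x \<in> sphere 0 1"
    and max: "\<forall>y\<in>sphere 0 1. y \<bullet> (M *v y) \<le> x \<bullet> (M *v x)"
    using continuous_attains_sup[OF compact_sphere] by blast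
  have "lambda_max M = x \<bullet> (M *v x)"
    unfolding lambda_max_def by (rule cSup_eq_maximum) (use x max in auto)
  with x max show "\<exists>x. norm x = 1 \<and> x \<bullet> (M *v x) = lambda_max M"
    and "norm y = 1 \<Longrightarrow> y \<bullet> (M *v y) \<le> lambda_max M" by auto
qed

lemma form_le_lambda_max: "x \<bullet> (M *v x) \<le> lambda_max M * (x \<bullet> x)"
proof (cases "x = 0")
  case False
  then have "(1 / norm x)\<^sup>2 * (x \<bullet> (M *v x)) \<le> lambda_max M"
    using form_le_lambda_max_unit[of "(1 / norm x) *\<^sub>R x" M, unfolded form_scaleR_vector] by simp
  with False show ?thesis
    by (simp add: power_divide divide_le_eq dot_square_norm mult.commute)
qed simp

lemma psd_lambda_max_shift:
  assumes "symmetric_mat M"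
  shows "psd (lambda_max M *\<^sub>R mat 1 - M)"
proof -
  have "symmetric_mat (lambda_max M *\<^sub>R mat 1 - M)"
    using assms by (simp add: symmetric_mat_iff mat_def)
  then show ?thesis
    unfolding psd_def form_shift using form_le_lambda_max[of _ M] by simp
qed

lemma convex_on_lambda_max_pencil: "convex_on UNIV (\<lambda>q. lambda_max (C + q *\<^sub>R D))"
proof (rule convex_onI)
  fix t q q' :: real
  assume t: "0 < t" "t < 1"
  obtain x where x: "norm x = 1"
    and max: "x \<bullet> ((C + ((1 - t) *\<^sub>R q + t *\<^sub>R q') *\<^sub>R D) *v x)
             = lambda_max (C + ((1 - t) *\<^sub>R q + t *\<^sub>R q') *\<^sub>R D)"
    using lambda_max_attained by blast
  have "x \<bullet> ((C + ((1 - t) *\<^sub>R q + t *\<^sub>R q') *\<^sub>R D) *v x)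
        = (1 - t) * (x \<bullet> ((C + q *\<^sub>R D) *v x)) + t * (x \<bullet> ((C + q' *\<^sub>R D) *v x))"
    by (simp add: form_pencil algebra_simps)
  also have "\<dots> \<le> (1 - t) * lambda_max (C + q *\<^sub>R D) + t * lambda_max (C + q' *\<^sub>R D)"
    using t form_le_lambda_max_unit[OF x] by (intro add_mono mult_left_mono) auto
  finally show "lambda_max (C + ((1 - t) *\<^sub>R q + t *\<^sub>R q') *\<^sub>R D)
                \<le> (1 - t) * lambda_max (C + q *\<^sub>R D) + t * lambda_max (C + q' *\<^sub>R D)"
    using max by simp
qed simp

lemma lambda_max_pencil_attains_min:
  fixes C D :: "real^'k^'k"
  assumes pos: "0 < y1 \<bullet> (D *v y1)" and neg: "y2 \<bullet> (D *v y2) < 0"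
  obtains p where "\<And>q. lambda_max (C + p *\<^sub>R D) \<le> lambda_max (C + q *\<^sub>R D)"
proof -
  define g where "g q = lambda_max (C + q *\<^sub>R D)" for q
  have cont: "continuous_on UNIV g"
    unfolding g_def by (rule convex_on_continuous[OF open_UNIV convex_on_lambda_max_pencil])
  define S where "S = {q. g q \<le> g 0}"
  have bound: "q * (y \<bullet> (D *v y)) \<le> g 0 * (y \<bullet> y) - y \<bullet> (C *v y)" if "q \<in> S" for q y
  proof -
    have "y \<bullet> (C *v y) + q * (y \<bullet> (D *v y)) \<le> g q * (y \<bullet> y)"
      using form_le_lambda_max[of y "C + q *\<^sub>R D"] by (simp add: g_def form_pencil)
    also have "\<dots> \<le> g 0 * (y \<bullet> y)"
      using that by (intro mult_right_mono) (auto simp: S_def)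
    finally show ?thesis by simp
  qed
  have "S \<subseteq> {(g 0 * (y2 \<bullet> y2) - y2 \<bullet> (C *v y2)) / (y2 \<bullet> (D *v y2))
             .. (g 0 * (y1 \<bullet> y1) - y1 \<bullet> (C *v y1)) / (y1 \<bullet> (D *v y1))}"
    using bound pos neg by (auto simp: pos_le_divide_eq neg_divide_le_eq)
  then have "bounded S" by (rule bounded_subset[OF bounded_closed_interval])
  moreover have "closed S"
    unfolding S_def by (intro closed_Collect_le cont continuous_on_const)
  ultimately have "compact S" by (simp add: compact_eq_bounded_closed)
  moreover have "0 \<in> S" by (simp add: S_def)
  ultimately obtain p where "p \<in> S" and pmin: "\<forall>q\<in>S. g p \<le> g q"
    using continuous_attains_inf[of S g] continuous_on_subset[OF cont] by blast
  then have "g p \<le> g q" for q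
    by (cases "q \<in> S") (auto simp: S_def)
  then show thesis using that unfolding g_def by blast
qed

text \<open>The maximizers for the pencil at p + s/(n+1) satisfy s x^T D x \<ge> 0 because the top
  eigenvalue cannot drop below its minimum; a limit point of them is a maximizer at p.\<close>

lemma lambda_max_pencil_min_signed_maximizer:
  fixes C D :: "real^'k^'k"
  assumes min: "\<And>q. lambda_max (C + p *\<^sub>R D) \<le> lambda_max (C + q *\<^sub>R D)"
  shows "\<exists>v. norm v = 1 \<and> 0 \<le> s * (v \<bullet> (D *v v))
             \<and> v \<bullet> ((C + p *\<^sub>R D) *v v) = lambda_max (C + p *\<^sub>R D)"
proof -
  define A where "A = C + p *\<^sub>R D"
  define e where "e n = s / real (Suc n)" for n
  define xs where "xs n = (SOME x. norm x = 1 \<and>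
      x \<bullet> ((C + (p + e n) *\<^sub>R D) *v x) = lambda_max (C + (p + e n) *\<^sub>R D))" for n
  have xs: "norm (xs n) = 1"
    "xs n \<bullet> ((C + (p + e n) *\<^sub>R D) *v xs n) = lambda_max (C + (p + e n) *\<^sub>R D)" for n
    using someI_ex[OF lambda_max_attained] unfolding xs_def by blast+
  have perturbed: "lambda_max A \<le> xs n \<bullet> (A *v xs n) + e n * (xs n \<bullet> (D *v xs n))" for n
    using min[of "p + e n"] xs(2)[of n] by (simp add: A_def form_pencil algebra_simps)
  have signed: "0 \<le> s * (xs n \<bullet> (D *v xs n))" for n
  proof -
    have "0 \<le> e n * (xs n \<bullet> (D *v xs n))"
      using perturbed[of n] form_le_lambda_max_unit[OF xs(1)[of n], where M = A] by linarith
    then show ?thesis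
      by (simp add: e_def zero_le_divide_iff)
  qed
  obtain l r where l: "l \<in> sphere 0 1" and r: "strict_mono r" and lim: "(xs \<circ> r) \<longlonglongrightarrow> l"
    using compact_sphere[of "0::real^'k" 1] xs(1) unfolding compact_def by (metis mem_sphere_0)
  have "(\<lambda>n. s * (xs (r n) \<bullet> (D *v xs (r n)))) \<longlonglongrightarrow> s * (l \<bullet> (D *v l))"
    using tendsto_form[OF lim] by (intro tendsto_mult_left) (simp add: o_def)
  then have sign_l: "0 \<le> s * (l \<bullet> (D *v l))"
    using signed by (intro LIMSEQ_le_const) auto
  have "(\<lambda>n. e (r n)) \<longlonglongrightarrow> 0"
    using LIMSEQ_subseq_LIMSEQ[OF LIMSEQ_inverse_real_of_nat r] tendsto_mult_left[of _ 0 _ s]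
    by (simp add: e_def o_def divide_inverse)
  then have "(\<lambda>n. xs (r n) \<bullet> (A *v xs (r n)) + e (r n) * (xs (r n) \<bullet> (D *v xs (r n))))
      \<longlonglongrightarrow> l \<bullet> (A *v l) + 0 * (l \<bullet> (D *v l))"
    using tendsto_form[OF lim, of A] tendsto_form[OF lim, of D]
    by (intro tendsto_add tendsto_mult) (simp_all add: o_def)
  then have "lambda_max A \<le> l \<bullet> (A *v l)"
    using perturbed by (intro LIMSEQ_le_const) auto
  moreover have "l \<bullet> (A *v l) \<le> lambda_max A"
    using l by (intro form_le_lambda_max_unit) simp
  ultimately show ?thesis
    using l sign_l unfolding A_def by (intro exI[of _ l]) simp
qed

text \<open>Top eigenvectors of A are the null vectors of the psd matrix \<lambda>_max I - A, so the whole
  segment from u to v consists of (multiples of) top eigenvectors; the intermediate value theorem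
  finds a D-null point on it.\<close>

lemma maximizer_on_null_cone:
  fixes A D :: "real^'k^'k"
  assumes A: "symmetric_mat A" and D: "symmetric_mat D"
    and u: "norm u = 1" "u \<bullet> (A *v u) = lambda_max A" "0 \<le> u \<bullet> (D *v u)"
    and v: "norm v = 1" "v \<bullet> (A *v v) = lambda_max A" "v \<bullet> (D *v v) \<le> 0"
  shows "\<exists>x. norm x = 1 \<and> x \<bullet> (D *v x) = 0 \<and> x \<bullet> (A *v x) = lambda_max A"
proof (cases "u \<bullet> (D *v u) = 0")
  case True
  with u show ?thesis by blast
next
  case False
  with u have Du: "0 < u \<bullet> (D *v u)" by simp
  define P where "P = lambda_max A *\<^sub>R mat 1 - A"
  have P: "psd P" unfolding P_def by (rule psd_lambda_max_shift[OF A])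
  have Pu: "u \<bullet> (P *v u) = 0" and Pv: "v \<bullet> (P *v v) = 0"
    using u v by (simp_all add: P_def form_shift dot_square_norm)
  then have Puv: "u \<bullet> (P *v v) = 0"
    using psd_cauchy_schwarz[OF P, of u v] by simp
  define w where "w t = (1 - t) *\<^sub>R u + t *\<^sub>R v" for t
  have "\<exists>t\<ge>0. t \<le> 1 \<and> w t \<bullet> (D *v w t) = 0"
    using Du v(3) unfolding w_def by (intro IVT2' continuous_on_form) (auto intro!: continuous_intros)
  then obtain t where t: "t \<le> 1" and Dw: "w t \<bullet> (D *v w t) = 0" by blast
  have Pw: "w t \<bullet> (P *v w t) = 0"
    using P unfolding w_def psd_def by (simp add: form_expand Pu Pv Puv)
  have "w t \<noteq> 0"
  proof
    assume w0: "w t = 0"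
    then have "(1 - t) *\<^sub>R u = (- t) *\<^sub>R v"
      unfolding w_def by (simp add: eq_neg_iff_add_eq_0)
    then have "(1 - t)\<^sup>2 * (u \<bullet> (D *v u)) = t\<^sup>2 * (v \<bullet> (D *v v))"
      by (metis form_scaleR_vector power2_minus)
    moreover from w0 v(1) have "t \<noteq> 1" by (auto simp: w_def)
    with Du have "0 < (1 - t)\<^sup>2 * (u \<bullet> (D *v u))" by simp
    moreover have "t\<^sup>2 * (v \<bullet> (D *v v)) \<le> 0" using v(3) by (simp add: mult_nonneg_nonpos)
    ultimately show False by linarith
  qed
  define x where "x = (1 / norm (w t)) *\<^sub>R w t"
  have "norm x = 1" using \<open>w t \<noteq> 0\<close> by (simp add: x_def)
  moreover have "x \<bullet> (D *v x) = 0" and "x \<bullet> (P *v x) = 0"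
    unfolding x_def form_scaleR_vector Dw Pw by simp_all
  ultimately show ?thesis
    by (intro exI[of _ x]) (simp add: P_def form_shift dot_square_norm)
qed

lemma pencil_null_maximizer:
  fixes C D :: "real^'k^'k"
  assumes C: "symmetric_mat C" and D: "symmetric_mat D"
    and indefinite: "(\<exists>y. 0 < y \<bullet> (D *v y)) \<longleftrightarrow> (\<exists>y. y \<bullet> (D *v y) < 0)"
  shows "\<exists>p x. norm x = 1 \<and> x \<bullet> (D *v x) = 0
               \<and> x \<bullet> ((C + p *\<^sub>R D) *v x) = lambda_max (C + p *\<^sub>R D)"
proof (cases "\<exists>y. 0 < y \<bullet> (D *v y)")
  case False
  with indefinite have "y \<bullet> (D *v y) = 0" for y
    by (meson linorder_neqE_linordered_idom)
  moreover obtain x where "norm x = 1" "x \<bullet> ((C + 0 *\<^sub>R D) *v x) = lambda_max (C + 0 *\<^sub>R D)"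
    using lambda_max_attained by blast
  ultimately show ?thesis by blast
next
  case True
  with indefinite obtain y1 y2 where "0 < y1 \<bullet> (D *v y1)" "y2 \<bullet> (D *v y2) < 0" by blast
  then obtain p where min: "\<And>q. lambda_max (C + p *\<^sub>R D) \<le> lambda_max (C + q *\<^sub>R D)"
    using lambda_max_pencil_attains_min[where C = C] by blast
  obtain u where u: "norm u = 1" "0 \<le> 1 * (u \<bullet> (D *v u))"
    "u \<bullet> ((C + p *\<^sub>R D) *v u) = lambda_max (C + p *\<^sub>R D)"
    using lambda_max_pencil_min_signed_maximizer[OF min] by blast
  obtain v where v: "norm v = 1" "0 \<le> -1 * (v \<bullet> (D *v v))"
    "v \<bullet> ((C + p *\<^sub>R D) *v v) = lambda_max (C + p *\<^sub>R D)"
    using lambda_max_pencil_min_signed_maximizer[OF min] by blast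
  have "symmetric_mat (C + p *\<^sub>R D)" using C D by (simp add: symmetric_mat_iff)
  from maximizer_on_null_cone[OF this D u(1,3) _ v(1,3)] u(2) v(2) show ?thesis by auto
qed

section \<open>The partial transpose\<close>

lemma symmetric_mat_ptrans: "symmetric_mat B \<Longrightarrow> symmetric_mat (ptrans B)"
  by (simp add: symmetric_mat_iff ptrans_def)

lemma trace_mult_ptrans: "trace (M ** ptrans N) = trace (ptrans M ** N)"
proof -
  have trace_eq: "trace (P ** X) = (\<Sum>(i, j)\<in>UNIV \<times> UNIV. P $ i $ j * X $ j $ i)"
    for P X :: "('m::finite, 'n::finite) bimat"
    by (simp add: trace_mult_eq_sum sum.cartesian_product)
  show ?thesis
    unfolding trace_eq ptrans_def
    by (rule sum.reindex_bij_witness[where i="\<lambda>(i, j). ((fst i, snd j), (fst j, snd i))"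
          and j="\<lambda>(i, j). ((fst i, snd j), (fst j, snd i))"]) auto
qed

lemma complex_form_Re_Im:
  fixes B C :: "real^'k^'k" and z :: "complex^'k"
  assumes B: "symmetric_mat B" and C: "symmetric_mat C"
  defines "u \<equiv> \<chi> i. Re (z $ i)" and "v \<equiv> \<chi> i. Im (z $ i)"
  shows "(\<Sum>i\<in>UNIV. \<Sum>j\<in>UNIV. cnj (z $ i)
            * (\<chi> i j. complex_of_real (B $ i $ j) + \<i> * complex_of_real (C $ i $ j)) $ i $ j * z $ j)
         = Complex (u \<bullet> (B *v u) + v \<bullet> (B *v v)) (u \<bullet> (C *v u) + v \<bullet> (C *v v))"
    (is "?s = _")
proof (rule complex_eqI)
  have "Re ?s = u \<bullet> (B *v u) + v \<bullet> (B *v v) - (u \<bullet> (C *v v) - v \<bullet> (C *v u))"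
    by (simp add: Re_sum form_eq_sum u_def v_def algebra_simps sum.distrib sum_subtractf)
  then show "Re ?s = Re (Complex (u \<bullet> (B *v u) + v \<bullet> (B *v v)) (u \<bullet> (C *v u) + v \<bullet> (C *v v)))"
    using symmetric_form_commute[OF C, of u v] by simp
  have "Im ?s = u \<bullet> (B *v v) - v \<bullet> (B *v u) + (u \<bullet> (C *v u) + v \<bullet> (C *v v))"
    by (simp add: Im_sum form_eq_sum u_def v_def algebra_simps sum.distrib sum_subtractf)
  then show "Im ?s = Im (Complex (u \<bullet> (B *v u) + v \<bullet> (B *v v)) (u \<bullet> (C *v u) + v \<bullet> (C *v v)))"
    using symmetric_form_commute[OF B, of u v] by simp
qed

lemma norm_complex_vec_Re_Im:
  fixes z :: "complex^'k"
  shows "(norm z)\<^sup>2 = (\<chi> i. Re (z $ i)) \<bullet> (\<chi> i. Re (z $ i))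
                     + (\<chi> i. Im (z $ i)) \<bullet> (\<chi> i. Im (z $ i))"
proof -
  have "(norm z)\<^sup>2 = (\<Sum>i\<in>UNIV. (cmod (z $ i))\<^sup>2)"
    by (simp add: norm_vec_def L2_set_def sum_nonneg)
  also have "\<dots> = (\<Sum>i\<in>UNIV. Re (z $ i) * Re (z $ i) + Im (z $ i) * Im (z $ i))"
    by (intro sum.cong refl) (subst cmod_power2, simp add: power2_eq_square)
  finally show ?thesis by (simp add: inner_vec_def sum.distrib)
qed

lemma ptrans_saddle_point:
  fixes B :: "('m::finite, 'n::finite) bimat"
  assumes B: "symmetric_mat B"
  obtains x p L where "norm x = 1" "x \<bullet> (B *v x) = L" "x \<bullet> (ptrans B *v x) = L"
    "psd (L *\<^sub>R mat 1 - (p *\<^sub>R B + (1 - p) *\<^sub>R ptrans B))"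
proof -
  define D where "D = B - ptrans B"
  have C: "symmetric_mat (ptrans B)" by (rule symmetric_mat_ptrans[OF B])
  have D: "symmetric_mat D" using B C by (simp add: D_def symmetric_mat_iff)
  have "(\<exists>y. 0 < y \<bullet> (D *v y)) \<longleftrightarrow> (\<exists>y. y \<bullet> (D *v y) < 0)"
    using D by (rule zero_diag_form_indefinite) (simp add: D_def ptrans_def)
  then obtain p x where x: "norm x = 1" and null: "x \<bullet> (D *v x) = 0"
    and max: "x \<bullet> ((ptrans B + p *\<^sub>R D) *v x) = lambda_max (ptrans B + p *\<^sub>R D)"
    using pencil_null_maximizer[OF C D] by blast
  have pencil: "ptrans B + p *\<^sub>R D = p *\<^sub>R B + (1 - p) *\<^sub>R ptrans B"
    by (simp add: D_def algebra_simps)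
  define L where "L = lambda_max (ptrans B + p *\<^sub>R D)"
  have C_value: "x \<bullet> (ptrans B *v x) = L"
    using max null by (simp add: L_def form_pencil)
  show thesis
  proof (rule that[OF x _ C_value])
    show "x \<bullet> (B *v x) = L"
      using null C_value by (simp add: D_def matrix_vector_mult_diff_rdistrib inner_diff_right)
    have "symmetric_mat (ptrans B + p *\<^sub>R D)" using C D by (simp add: symmetric_mat_iff)
    then show "psd (L *\<^sub>R mat 1 - (p *\<^sub>R B + (1 - p) *\<^sub>R ptrans B))"
      unfolding L_def pencil by (rule psd_lambda_max_shift)
  qed
qed

context
  fixes B :: "('m::finite, 'n::finite) bimat" and x :: "real^('m \<times> 'n)" and p L :: real
  assumes B: "symmetric_mat B" and x: "norm x = 1"
    and primal: "x \<bullet> (B *v x) = L" "x \<bullet> (ptrans B *v x) = L"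
    and dual: "psd (L *\<^sub>R mat 1 - (p *\<^sub>R B + (1 - p) *\<^sub>R ptrans B))"
begin

lemma saddle_form_le: "p * (y \<bullet> (B *v y)) + (1 - p) * (y \<bullet> (ptrans B *v y)) \<le> L * (y \<bullet> y)"
  using psd_shift_imp_form_le[OF dual, of y]
  by (simp add: matrix_vector_mult_add_rdistrib inner_add_right)

lemma W1i_max_eq_saddle_value: "W1i_max B = L"
  unfolding W1i_max_def
proof (rule cSup_eq_maximum)
  define z :: "complex^('m \<times> 'n)" where "z = (\<chi> i. complex_of_real (x $ i))"
  have "(\<chi> i. Re (z $ i)) = x" "(\<chi> i. Im (z $ i)) = 0"
    by (simp_all add: z_def vec_eq_iff)
  then have "complex_of_real L * (1 + \<i>) = (\<Sum>i\<in>UNIV. \<Sum>j\<in>UNIV. cnj (z $ i)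
      * (\<chi> i j. complex_of_real (B $ i $ j) + \<i> * complex_of_real (ptrans B $ i $ j)) $ i $ j * z $ j)"
    using complex_form_Re_Im[OF B symmetric_mat_ptrans[OF B], of z] primal
    by (simp add: complex_eq_iff)
  moreover have "norm z = 1" using x by (simp add: z_def norm_vec_def)
  ultimately show "L \<in> W1i B"
    unfolding W1i_def numerical_range_def by blast
next
  fix c assume "c \<in> W1i B"
  then obtain z :: "complex^('m \<times> 'n)" where z: "norm z = 1"
    and c: "complex_of_real c * (1 + \<i>) = (\<Sum>i\<in>UNIV. \<Sum>j\<in>UNIV. cnj (z $ i)
            * (\<chi> i j. complex_of_real (B $ i $ j) + \<i> * complex_of_real (ptrans B $ i $ j)) $ i $ j * z $ j)"
    unfolding W1i_def numerical_range_def by blast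
  define u where "u = (\<chi> i. Re (z $ i))"
  define v where "v = (\<chi> i. Im (z $ i))"
  have "Complex c c = Complex (u \<bullet> (B *v u) + v \<bullet> (B *v v))
                        (u \<bullet> (ptrans B *v u) + v \<bullet> (ptrans B *v v))"
    using c complex_form_Re_Im[OF B symmetric_mat_ptrans[OF B], of z]
    by (simp add: complex_eq_iff u_def v_def)
  then have cB: "c = u \<bullet> (B *v u) + v \<bullet> (B *v v)"
    and cC: "c = u \<bullet> (ptrans B *v u) + v \<bullet> (ptrans B *v v)" by simp_all
  have "c = p * (u \<bullet> (B *v u) + v \<bullet> (B *v v))
            + (1 - p) * (u \<bullet> (ptrans B *v u) + v \<bullet> (ptrans B *v v))"
    by (simp only: flip: cB cC) (simp add: algebra_simps)
  also have "\<dots> \<le> L * (u \<bullet> u) + L * (v \<bullet> v)"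
    using saddle_form_le[of u] saddle_form_le[of v] by (simp add: algebra_simps)
  also have "\<dots> = L"
    using norm_complex_vec_Re_Im[of z] z by (simp add: u_def v_def distrib_left[symmetric])
  finally show "c \<le> L" .
qed

lemma sdp_value_eq_saddle_value:
  "Sup {trace (B ** X) | X. symmetric_mat X \<and> trace (B ** X) = trace (B ** ptrans X)
                            \<and> trace X = 1 \<and> psd X} = L"
proof (rule cSup_eq_maximum)
  have "trace (outer x) = x \<bullet> x"
    by (simp add: trace_def outer_def inner_vec_def)
  then have "trace (outer x) = 1"
    using x by (simp add: dot_square_norm)
  moreover have "trace (B ** outer x) = L" "trace (B ** ptrans (outer x)) = L"
    using primal by (simp_all add: trace_mult_outer trace_mult_ptrans)
  ultimately show "L \<in> {trace (B ** X) | X. symmetric_mat X \<and> trace (B ** X) = trace (B ** ptrans X)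
                            \<and> trace X = 1 \<and> psd X}"
    using psd_outer[of x] by (force simp: psd_def)
next
  fix t assume "t \<in> {trace (B ** X) | X. symmetric_mat X \<and> trace (B ** X) = trace (B ** ptrans X)
                            \<and> trace X = 1 \<and> psd X}"
  then obtain X where t: "t = trace (B ** X)" and balanced: "trace (B ** X) = trace (ptrans B ** X)"
    and X: "trace X = 1" "psd X"
    by (auto simp: trace_mult_ptrans)
  have "0 \<le> trace ((L *\<^sub>R mat 1 - (p *\<^sub>R B + (1 - p) *\<^sub>R ptrans B)) ** X)"
    using trace_mult_psd_nonneg[OF dual X(2)] .
  also have "\<dots> = L - t"
    using t balanced X(1)
    unfolding trace_mult_shift trace_mult_pencil by (simp add: algebra_simps)
  finally show "t \<le> L" by simp
qed

lemma dual_value_eq_saddle_value: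
  "Inf {c. \<exists>q. psd (c *\<^sub>R mat 1 - (q *\<^sub>R B + (1 - q) *\<^sub>R ptrans B))} = L"
proof (rule cInf_eq_minimum)
  show "L \<in> {c. \<exists>q. psd (c *\<^sub>R mat 1 - (q *\<^sub>R B + (1 - q) *\<^sub>R ptrans B))}"
    using dual by blast
next
  fix c assume "c \<in> {c. \<exists>q. psd (c *\<^sub>R mat 1 - (q *\<^sub>R B + (1 - q) *\<^sub>R ptrans B))}"
  then obtain q where "psd (c *\<^sub>R mat 1 - (q *\<^sub>R B + (1 - q) *\<^sub>R ptrans B))" by blast
  then have "x \<bullet> ((q *\<^sub>R B + (1 - q) *\<^sub>R ptrans B) *v x) \<le> c * (x \<bullet> x)"
    by (rule psd_shift_imp_form_le)
  then show "L \<le> c"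
    using x primal by (simp add: matrix_vector_mult_add_rdistrib inner_add_right dot_square_norm
        algebra_simps)
qed

end

theorem mainTheorem4:
  fixes B :: "('m::finite, 'n::finite) bimat"
  assumes "symmetric_mat B"
  shows "W1i_max B = Sup {trace (B ** X) | X. symmetric_mat X \<and> trace (B ** X) = trace (B ** ptrans X)
                                          \<and> trace X = 1 \<and> psd X}
       \<and> W1i_max B = Inf {c. \<exists>p. psd (c *\<^sub>R mat 1 - (p *\<^sub>R B + (1 - p) *\<^sub>R ptrans B))}"
proof -
  obtain x p L where saddle: "norm x = 1" "x \<bullet> (B *v x) = L" "x \<bullet> (ptrans B *v x) = L"
    "psd (L *\<^sub>R mat 1 - (p *\<^sub>R B + (1 - p) *\<^sub>R ptrans B))"
    using ptrans_saddle_point[OF assms] .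
  show ?thesis
    using W1i_max_eq_saddle_value[OF assms saddle] sdp_value_eq_saddle_value[OF assms saddle]
      dual_value_eq_saddle_value[OF assms saddle] by simp
qed

end
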